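(* Let $q\ge2$ and $L\ge2$ be integers, let $\mathcal{C}\subseteq[q]^n$ be a code, and suppose the matrix $\varphi(\mathcal{C})/\sqrt{(q-1)n}$ satisfies RIP-2 of order $L$ with constant $1/2$. Then $\mathcal{C}$ is $\Big(\big(1-\frac1q\big)\big(1-\sqrt{\frac{1.5}{L-1}}\big),\,L-1\Big)$-list decodable.
   Context: $[q]=\{0,1,\dots,q-1\}$; $\delta(x,y)$ is the fraction of coordinates where $x,y\in[q]^n$ differ. A code $\mathcal{C}$ is $(\rho,\ell)$-list decodable if for every $y\in[q]^n$ the number of $c\in\mathcal{C}$ with $\delta(c,y)<\rho$ is at most $\ell$. Simplex encoding: for $x\in[q]$, $\varphi(x)\in\mathbb{C}^{q-1}$ has coordinates $\varphi(x)(\alpha)=\omega^{x\alpha}$ for $\alpha\in\{1,\dots,q-1\}$, $\omega=e^{2\pi\mathbf{i}/q}$; for $x\in[q]^n$, $\varphi(x)\in\mathbb{C}^{n(q-1)}$ is the concatenation of $\varphi(x_1),\dots,\varphi(x_n)$. $\varphi(\mathcal{C})$ is the $(q-1)n\times|\mathcal{C}|$ matrix whose column indexed by $c\in\mathcal{C}$ is $\varphi(c)$. A matrix $M\in\mathbb{C}^{m\times N}$ satisfies RIP-2 of order $k$ with constant $\delta$ if for every $x\in\mathbb{C}^N$ with at most $k$ nonzero entries, $(1-\delta)\|x\|_2^2\le\|Mx\|_2^2\le(1+\delta)\|x\|_2^2$. *)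

theory Defs
  imports "HOL-Analysis.Analysis"
begin

definition words :: "nat \<Rightarrow> nat \<Rightarrow> nat list set" where
  "words q n = {x. length x = n \<and> (\<forall>i<n. x ! i < q)}"

definition rel_dist :: "nat list \<Rightarrow> nat list \<Rightarrow> real" where
  "rel_dist x y = real (card {i. i < length x \<and> x ! i \<noteq> y ! i}) / real (length x)"

definition list_decodable :: "nat \<Rightarrow> nat \<Rightarrow> nat list set \<Rightarrow> real \<Rightarrow> nat \<Rightarrow> bool" where
  "list_decodable q n C \<rho> l \<longleftrightarrow>
     (\<forall>y \<in> words q n. card {c \<in> C. rel_dist c y < \<rho>} \<le> l)"

definition omega :: "nat \<Rightarrow> complex" where
  "omega q = exp (2 * complex_of_real pi * \<i> / of_nat q)"

definition simplex_enc :: "nat \<Rightarrow> nat \<Rightarrow> nat \<Rightarrow> complex" where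
  "simplex_enc q x \<alpha> = omega q ^ (x * \<alpha>)"

text \<open>Matrix M = phi(C) scaled by s, rows indexed by pairs (i, alpha) with i < n and
  1 <= alpha <= q-1, columns indexed by codewords c in C. Squared norm of M x for a
  vector x indexed by C (only coordinates in C matter).\<close>
definition enc_sqnorm :: "nat \<Rightarrow> nat \<Rightarrow> nat list set \<Rightarrow> real \<Rightarrow> (nat list \<Rightarrow> complex) \<Rightarrow> real" where
  "enc_sqnorm q n C s x =
     (\<Sum>i<n. \<Sum>\<alpha>\<in>{1..q-1}.
        (cmod (\<Sum>c\<in>C. complex_of_real s * simplex_enc q (c ! i) \<alpha> * x c))\<^sup>2)"

definition RIP2 :: "nat \<Rightarrow> nat \<Rightarrow> nat list set \<Rightarrow> real \<Rightarrow> nat \<Rightarrow> real \<Rightarrow> bool" where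
  "RIP2 q n C s k \<delta> \<longleftrightarrow>
     (\<forall>x :: nat list \<Rightarrow> complex.
        card {c \<in> C. x c \<noteq> 0} \<le> k \<longrightarrow>
        (1 - \<delta>) * (\<Sum>c\<in>C. (cmod (x c))\<^sup>2) \<le> enc_sqnorm q n C s x \<and>
        enc_sqnorm q n C s x \<le> (1 + \<delta>) * (\<Sum>c\<in>C. (cmod (x c))\<^sup>2))"

end

theory Submission
  imports Defs
begin

text \<open>
  Suppose some y had L codewords within relative distance \<rho> = (1 - 1/q)(1 - \<sigma>),
  \<sigma> = sqrt (1.5/(L-1)). The inner product of \<phi>(c) and \<phi>(y) is (q-1)n - q d(c,y), so the
  sum A of the L encodings correlates with \<phi>(y) by more than L (q-1)n \<sigma>. Since
  |\<phi>(y)|^2 = (q-1)n, Cauchy-Schwarz gives |A|^2 > L^2 \<sigma>^2 (q-1)n, whereas RIP applied to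
  the indicator vector of the L codewords gives |A|^2 \<le> 1.5 L (q-1)n. Together
  L \<sigma>^2 < 1.5, i.e. L < L - 1.
\<close>

lemma norm_omega: "q > 0 \<Longrightarrow> cmod (omega q) = 1"
  by (simp add: omega_def)

lemma omega_power_self: "q > 0 \<Longrightarrow> omega q ^ q = 1"
  by (simp add: omega_def flip: exp_of_nat_mult)

lemma omega_power_inj:
  assumes "q > 0" "a < q" "b < q" "omega q ^ a = omega q ^ b"
  shows "a = b"
proof -
  have "exp (of_nat a * (2 * complex_of_real pi * \<i> / of_nat q)) =
        exp (of_nat b * (2 * complex_of_real pi * \<i> / of_nat q))"
    using assms(4) unfolding omega_def exp_of_nat_mult .
  then obtain k :: int where
    "of_nat a * (2 * complex_of_real pi * \<i> / of_nat q) =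
     of_nat b * (2 * complex_of_real pi * \<i> / of_nat q) + (of_int (2 * k) * pi) * \<i>"
    by (auto simp: exp_eq)
  then have "Im (of_nat a * (2 * complex_of_real pi * \<i> / of_nat q)) =
     Im (of_nat b * (2 * complex_of_real pi * \<i> / of_nat q) + (of_int (2 * k) * pi) * \<i>)"
    by simp
  then have "(real a - real b) * pi = real_of_int k * real q * pi"
    using assms(1) by (simp add: field_simps)
  then have diff: "real a - real b = real_of_int k * real q" by simp
  have "\<bar>real_of_int k * real q\<bar> < 1 * real q"
    using assms(2,3) diff by linarith
  then have "\<bar>real_of_int k\<bar> < 1"
    using assms(1) by (simp add: abs_mult)
  then have "k = 0" by linarith
  then show ?thesis using diff by simp
qed

text \<open>Orthogonality of the characters \<alpha> \<mapsto> \<omega>^(a \<alpha>) of \<int>/q\<int>, with the term \<alpha> = 0 removed.\<close>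

lemma sum_simplex_enc_mult_cnj:
  assumes "q \<ge> 2" "a < q" "b < q"
  shows "(\<Sum>\<alpha>\<in>{1..q-1}. simplex_enc q a \<alpha> * cnj (simplex_enc q b \<alpha>)) =
         (if a = b then of_nat (q - 1) else -1)"
proof -
  define z where "z = omega q ^ a * cnj (omega q ^ b)"
  have term_eq: "simplex_enc q a \<alpha> * cnj (simplex_enc q b \<alpha>) = z ^ \<alpha>" for \<alpha>
    by (simp add: simplex_enc_def z_def power_mult power_mult_distrib)
  have unit: "omega q ^ k * cnj (omega q ^ k) = 1" for k
  proof -
    have "cmod (omega q ^ k) = 1" using assms(1) by (simp add: norm_power norm_omega)
    then show ?thesis by (metis complex_norm_square of_real_1 power_one)
  qed
  show ?thesis
  proof (cases "a = b")
    case True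
    then show ?thesis unfolding term_eq using unit by (simp add: z_def)
  next
    case False
    have "z \<noteq> 1"
    proof
      assume "z = 1"
      then have "omega q ^ a = omega q ^ b"
        using unit[of b] by (metis (no_types, lifting) mult.assoc mult.commute mult_1 z_def)
      then show False using omega_power_inj assms False by simp
    qed
    moreover have "z ^ q = 1"
    proof -
      have "z ^ q = (omega q ^ q) ^ a * cnj ((omega q ^ q) ^ b)"
        by (simp add: z_def power_mult_distrib flip: power_mult) (simp add: mult.commute)
      then show ?thesis using omega_power_self assms(1) by simp
    qed
    ultimately have "(\<Sum>\<alpha><q. z ^ \<alpha>) = 0" by (simp add: geometric_sum)
    moreover have "{..<q} = insert 0 {1..q-1}" using assms(1) by auto
    ultimately have "(\<Sum>\<alpha>\<in>{1..q-1}. z ^ \<alpha>) = -1" by (simp add: add_eq_0_iff)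
    then show ?thesis using False unfolding term_eq by simp
  qed
qed

lemma Re_inner_simplex_enc_words:
  assumes "q \<ge> 2" "c \<in> words q n" "y \<in> words q n"
  shows "Re (\<Sum>i<n. \<Sum>\<alpha>\<in>{1..q-1}. simplex_enc q (c ! i) \<alpha> * cnj (simplex_enc q (y ! i) \<alpha>)) =
         real n * (real q - 1 - real q * rel_dist c y)"
proof -
  have len: "length c = n" using assms(2) by (simp add: words_def)
  have "(\<Sum>i<n. \<Sum>\<alpha>\<in>{1..q-1}. simplex_enc q (c ! i) \<alpha> * cnj (simplex_enc q (y ! i) \<alpha>)) =
        (\<Sum>i<n. if c ! i = y ! i then of_nat (q - 1) else -1)"
    using assms by (intro sum.cong refl sum_simplex_enc_mult_cnj) (auto simp: words_def)
  then have "Re (\<Sum>i<n. \<Sum>\<alpha>\<in>{1..q-1}. simplex_enc q (c ! i) \<alpha> * cnj (simplex_enc q (y ! i) \<alpha>)) =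
        (\<Sum>i<n. if c ! i = y ! i then real q - 1 else -1)"
    using assms(1) by (simp add: if_distrib cong: if_cong)
  also have "\<dots> = (\<Sum>i<n. real q - 1 - real q * (if c ! i \<noteq> y ! i then 1 else 0))"
    by (intro sum.cong) auto
  also have "\<dots> = real n * (real q - 1) - real q * real (card {i. i < length c \<and> c ! i \<noteq> y ! i})"
    using len by (simp add: sum_subtractf sum.If_cases Collect_conj_eq lessThan_def Int_commute
        flip: sum_distrib_left)
  also have "\<dots> = real n * (real q - 1 - real q * rel_dist c y)"
    using len by (cases "n = 0") (simp_all add: rel_dist_def field_simps)
  finally show ?thesis .
qed

lemma sqnorm_simplex_enc:
  "q > 0 \<Longrightarrow> (\<Sum>i<n. \<Sum>\<alpha>\<in>{1..q-1}. (cmod (simplex_enc q (y ! i) \<alpha>))\<^sup>2) = real ((q - 1) * n)"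
  by (simp add: simplex_enc_def norm_power norm_omega)

lemma Re_sum_mult_cnj_squared_le:
  fixes a b :: "'i \<Rightarrow> complex"
  shows "(Re (\<Sum>i\<in>I. a i * cnj (b i)))\<^sup>2 \<le> (\<Sum>i\<in>I. (cmod (a i))\<^sup>2) * (\<Sum>i\<in>I. (cmod (b i))\<^sup>2)"
proof -
  have "\<bar>Re (\<Sum>i\<in>I. a i * cnj (b i))\<bar> \<le> cmod (\<Sum>i\<in>I. a i * cnj (b i))"
    by (rule abs_Re_le_cmod)
  also have "\<dots> \<le> (\<Sum>i\<in>I. cmod (a i * cnj (b i)))"
    by (rule norm_sum)
  also have "\<dots> = (\<Sum>i\<in>I. cmod (a i) * cmod (b i))"
    by (simp add: norm_mult)
  finally have "\<bar>Re (\<Sum>i\<in>I. a i * cnj (b i))\<bar>\<^sup>2 \<le> (\<Sum>i\<in>I. cmod (a i) * cmod (b i))\<^sup>2"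
    by (rule power_mono) simp
  then have "(Re (\<Sum>i\<in>I. a i * cnj (b i)))\<^sup>2 \<le> (\<Sum>i\<in>I. cmod (a i) * cmod (b i))\<^sup>2"
    by simp
  also have "\<dots> \<le> (\<Sum>i\<in>I. (cmod (a i))\<^sup>2) * (\<Sum>i\<in>I. (cmod (b i))\<^sup>2)"
    by (rule Cauchy_Schwarz_ineq_sum)
  finally show ?thesis .
qed

lemma Re_sum2_mult_cnj_squared_le:
  fixes a b :: "'i \<Rightarrow> 'j \<Rightarrow> complex"
  assumes "finite I" "finite J"
  shows "(Re (\<Sum>i\<in>I. \<Sum>j\<in>J. a i j * cnj (b i j)))\<^sup>2 \<le>
     (\<Sum>i\<in>I. \<Sum>j\<in>J. (cmod (a i j))\<^sup>2) * (\<Sum>i\<in>I. \<Sum>j\<in>J. (cmod (b i j))\<^sup>2)"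
  using Re_sum_mult_cnj_squared_le[of "case_prod a" "case_prod b" "I \<times> J"] assms
  by (simp add: sum.cartesian_product case_prod_beta)

text \<open>
  A Johnson-type bound: the encodings of codewords close to a common centre y add up to a
  long vector, because each of them correlates with \<phi>(y).
\<close>

lemma sqnorm_sum_simplex_enc_ball_gt:
  assumes q: "q \<ge> 2" and "n > 0" and S: "finite S" "S \<noteq> {}" "S \<subseteq> words q n"
    and y: "y \<in> words q n" and "\<sigma> \<ge> 0"
    and close: "\<And>c. c \<in> S \<Longrightarrow> rel_dist c y < (1 - 1 / real q) * (1 - \<sigma>)"
  shows "(real (card S))\<^sup>2 * \<sigma>\<^sup>2 * real ((q - 1) * n) <
         (\<Sum>i<n. \<Sum>\<alpha>\<in>{1..q-1}. (cmod (\<Sum>c\<in>S. simplex_enc q (c ! i) \<alpha>))\<^sup>2)"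
    (is "_ < ?P")
proof -
  define Q where "Q = real ((q - 1) * n)"
  define R where "R = Re (\<Sum>i<n. \<Sum>\<alpha>\<in>{1..q-1}.
                           (\<Sum>c\<in>S. simplex_enc q (c ! i) \<alpha>) * cnj (simplex_enc q (y ! i) \<alpha>))"
  have Q_pos: "Q > 0" using q \<open>n > 0\<close> by (simp add: Q_def)
  have "R = (\<Sum>c\<in>S. Re (\<Sum>i<n. \<Sum>\<alpha>\<in>{1..q-1}.
                          simplex_enc q (c ! i) \<alpha> * cnj (simplex_enc q (y ! i) \<alpha>)))"
    unfolding R_def sum_distrib_right Re_sum[symmetric]
    by (subst sum.swap, rule arg_cong[where f = Re], rule sum.cong[OF refl], subst sum.swap, rule refl)
  also have "\<dots> = (\<Sum>c\<in>S. real n * (real q - 1 - real q * rel_dist c y))"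
    using S y q by (intro sum.cong refl Re_inner_simplex_enc_words) auto
  finally have R_eq: "R = (\<Sum>c\<in>S. real n * (real q - 1 - real q * rel_dist c y))" .
  have "Q * \<sigma> < real n * (real q - 1 - real q * rel_dist c y)" if "c \<in> S" for c
  proof -
    have "real q * rel_dist c y < (real q - 1) * (1 - \<sigma>)"
      using close[OF that] q by (simp add: field_simps)
    then have "real n * (real q * rel_dist c y) < real n * ((real q - 1) * (1 - \<sigma>))"
      using \<open>n > 0\<close> by simp
    then show ?thesis using q by (simp add: Q_def algebra_simps)
  qed
  then have "real (card S) * Q * \<sigma> < R"
    unfolding R_eq using sum_strict_mono[of S "\<lambda>_. Q * \<sigma>"] S by (simp add: mult.assoc)
  moreover have "0 \<le> real (card S) * Q * \<sigma>" using Q_pos \<open>\<sigma> \<ge> 0\<close> by simp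
  ultimately have "(real (card S) * Q * \<sigma>)\<^sup>2 < R\<^sup>2" by (simp add: power_strict_mono)
  have "((real (card S))\<^sup>2 * \<sigma>\<^sup>2 * Q) * Q = (real (card S) * Q * \<sigma>)\<^sup>2"
    by algebra
  also have "\<dots> < R\<^sup>2" by fact
  also have "R\<^sup>2 \<le> ?P * (\<Sum>i<n. \<Sum>\<alpha>\<in>{1..q-1}. (cmod (simplex_enc q (y ! i) \<alpha>))\<^sup>2)"
    unfolding R_def by (rule Re_sum2_mult_cnj_squared_le[OF finite_lessThan finite_atLeastAtMost])
  also have "\<dots> = ?P * Q"
    using q by (subst sqnorm_simplex_enc) (simp_all add: Q_def)
  finally have "(real (card S))\<^sup>2 * \<sigma>\<^sup>2 * Q < ?P"
    using Q_pos by (simp only: mult_less_cancel_right_pos)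
  then show ?thesis unfolding Q_def .
qed

lemma enc_sqnorm_indicator:
  assumes "finite C" "S \<subseteq> C"
  shows "enc_sqnorm q n C s (indicator S) =
         s\<^sup>2 * (\<Sum>i<n. \<Sum>\<alpha>\<in>{1..q-1}. (cmod (\<Sum>c\<in>S. simplex_enc q (c ! i) \<alpha>))\<^sup>2)"
proof -
  have column_sum: "(\<Sum>c\<in>C. complex_of_real s * simplex_enc q (c ! i) \<alpha> * indicator S c) =
        complex_of_real s * (\<Sum>c\<in>S. simplex_enc q (c ! i) \<alpha>)" for i \<alpha>
  proof -
    have "(\<Sum>c\<in>C. complex_of_real s * simplex_enc q (c ! i) \<alpha> * indicator S c) =
          (\<Sum>c\<in>C. if c \<in> S then complex_of_real s * simplex_enc q (c ! i) \<alpha> else 0)"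
      by (intro sum.cong) (auto simp: indicator_def)
    also have "\<dots> = (\<Sum>c\<in>C \<inter> S. complex_of_real s * simplex_enc q (c ! i) \<alpha>)"
      using assms(1) by (rule sum.inter_restrict[symmetric])
    finally show ?thesis using assms(2) by (simp add: Int_absorb1 sum_distrib_left)
  qed
  show ?thesis
    unfolding enc_sqnorm_def column_sum
    by (simp only: norm_mult norm_of_real power2_abs power_mult_distrib) (simp add: sum_distrib_left)
qed

lemma RIP2_indicator_le:
  assumes "RIP2 q n C s k \<delta>" "finite C" "S \<subseteq> C" "card S \<le> k"
  shows "enc_sqnorm q n C s (indicator S) \<le> (1 + \<delta>) * real (card S)"
proof -
  have "{c \<in> C. indicator S c \<noteq> (0::complex)} = S" using assms(3) by (auto simp: indicator_def)
  moreover have "(cmod (indicator S c :: complex))\<^sup>2 = indicator S c" for c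
    by (simp add: indicator_def)
  then have "(\<Sum>c\<in>C. (cmod (indicator S c :: complex))\<^sup>2) = real (card S)"
    using assms(2,3) by (simp add: indicator_def Int_absorb1)
  ultimately show ?thesis using assms(1,4) unfolding RIP2_def by metis
qed

lemma finite_words: "finite (words q n)"
proof -
  have "words q n \<subseteq> {xs. set xs \<subseteq> {..<q} \<and> length xs = n}"
    by (auto simp: words_def in_set_conv_nth)
  then show ?thesis using finite_lists_length_eq[of "{..<q}" n] finite_subset by blast
qed

lemma RIP2_close_codewords_card_bound:
  assumes q: "q \<ge> 2" and "n > 0" and C: "C \<subseteq> words q n"
    and rip: "RIP2 q n C (1 / sqrt (real ((q - 1) * n))) k \<delta>"
    and S: "S \<subseteq> C" "S \<noteq> {}" "card S \<le> k"
    and y: "y \<in> words q n" and "\<sigma> \<ge> 0"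
    and close: "\<And>c. c \<in> S \<Longrightarrow> rel_dist c y < (1 - 1 / real q) * (1 - \<sigma>)"
  shows "real (card S) * \<sigma>\<^sup>2 < 1 + \<delta>"
proof -
  define Q where "Q = real ((q - 1) * n)"
  define P where "P = (\<Sum>i<n. \<Sum>\<alpha>\<in>{1..q-1}. (cmod (\<Sum>c\<in>S. simplex_enc q (c ! i) \<alpha>))\<^sup>2)"
  have Q_pos: "Q > 0" using q \<open>n > 0\<close> by (simp add: Q_def)
  have "finite C" using C finite_words finite_subset by blast
  then have "finite S" using S(1) finite_subset by blast
  have "S \<subseteq> words q n" using S(1) C by (rule subset_trans)
  then have "(real (card S))\<^sup>2 * \<sigma>\<^sup>2 * Q < P"
    unfolding P_def Q_def
    by (rule sqnorm_sum_simplex_enc_ball_gt[OF q \<open>n > 0\<close> \<open>finite S\<close> \<open>S \<noteq> {}\<close> _ y \<open>\<sigma> \<ge> 0\<close> close])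
  moreover have "P / Q \<le> (1 + \<delta>) * real (card S)"
    using RIP2_indicator_le[OF rip \<open>finite C\<close> S(1,3)] enc_sqnorm_indicator[OF \<open>finite C\<close> S(1)] Q_pos
    by (simp add: P_def Q_def power_divide)
  then have "P \<le> (1 + \<delta>) * (real (card S) * Q)" using Q_pos by (simp add: pos_divide_le_eq)
  moreover have "(real (card S))\<^sup>2 * \<sigma>\<^sup>2 * Q = (real (card S) * \<sigma>\<^sup>2) * (real (card S) * Q)"
    by algebra
  ultimately have "(real (card S) * \<sigma>\<^sup>2) * (real (card S) * Q) < (1 + \<delta>) * (real (card S) * Q)"
    by linarith
  then show ?thesis by (rule mult_right_less_imp_less) (use Q_pos in simp)
qed

theorem theorem3p5:
  fixes q L n :: nat and C :: "nat list set"
  assumes "q \<ge> 2" and "L \<ge> 2"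
    and "C \<subseteq> words q n"
    and "RIP2 q n C (1 / sqrt (real ((q - 1) * n))) L (1/2)"
  shows "list_decodable q n C ((1 - 1 / real q) * (1 - sqrt (1.5 / (real L - 1)))) (L - 1)"
proof (cases "n = 0")
  case True
  then have "C \<subseteq> {[]}" using assms(3) by (auto simp: words_def)
  then have "card {c \<in> C. P c} \<le> card {[] :: nat list}" for P
    by (intro card_mono) auto
  moreover have "card {[] :: nat list} \<le> L - 1" using assms(2) by simp
  ultimately show ?thesis unfolding list_decodable_def by (meson order_trans)
next
  case False
  define \<sigma> where "\<sigma> = sqrt (1.5 / (real L - 1))"
  have \<sigma>_sq: "(real L - 1) * \<sigma>\<^sup>2 = 1.5" and "\<sigma> > 0"
    using assms(2) by (simp_all add: \<sigma>_def field_simps)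
  show ?thesis unfolding list_decodable_def \<sigma>_def[symmetric]
  proof (intro ballI leI notI)
    fix y assume y: "y \<in> words q n"
    define T where "T = {c \<in> C. rel_dist c y < (1 - 1 / real q) * (1 - \<sigma>)}"
    assume "L - 1 < card T"
    then have "L \<le> card T" using assms(2) by simp
    then obtain S where S: "S \<subseteq> T" "card S = L"
      by (rule obtain_subset_with_card_n)
    then have "S \<subseteq> C" "S \<noteq> {}" using assms(2) by (auto simp: T_def)
    have close: "rel_dist c y < (1 - 1 / real q) * (1 - \<sigma>)" if "c \<in> S" for c
      using that S(1) by (auto simp: T_def)
    have n_pos: "n > 0" and \<sigma>_nonneg: "\<sigma> \<ge> 0" using False \<open>\<sigma> > 0\<close> by simp_all
    from RIP2_close_codewords_card_bound[OF assms(1) n_pos assms(3,4) \<open>S \<subseteq> C\<close> \<open>S \<noteq> {}\<close> _ y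
        \<sigma>_nonneg close]
    have "real L * \<sigma>\<^sup>2 < 1 + 1/2" using S(2) by simp
    then show False using \<sigma>_sq zero_less_power[OF \<open>\<sigma> > 0\<close>, of 2] unfolding left_diff_distrib by linarith
  qed
qed

end
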